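(* Let $\Gamma$ be a group and $\phi:\Gamma\to\mathbb R$ a homogeneous quasimorphism which is not a homomorphism. Let $\mu=\exp(2\pi i\phi):\Gamma\to S^1=U(1)$. Then $\frac{3}{\pi}\arcsin\frac{D(\mu)}{2}+\|d\phi\|_\infty\ge1$.
   Context: A quasimorphism is a function $\phi:\Gamma\to\mathbb R$ with $d\phi(\gamma,\eta)=\phi(\gamma\eta)-\phi(\gamma)-\phi(\eta)$ bounded on $\Gamma\times\Gamma$; $\|d\phi\|_\infty=\sup|d\phi|$. It is homogeneous if $\phi(\gamma^n)=n\phi(\gamma)$ for all $\gamma\in\Gamma$, $n\in\mathbb Z$. For a map $\mu:\Gamma\to U(1)$, $D(\mu)=\inf\{\sup_\gamma|\mu(\gamma)-\nu(\gamma)|:\nu\in\mathrm{Hom}(\Gamma,U(1))\}$. *)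

theory Defs
  imports Complex_Main "HOL-Algebra.Group"
begin

definition quasimorphism :: "('a, 'b) monoid_scheme \<Rightarrow> ('a \<Rightarrow> real) \<Rightarrow> bool" where
  "quasimorphism G \<phi> \<longleftrightarrow>
     (\<exists>C. \<forall>\<gamma>\<in>carrier G. \<forall>\<eta>\<in>carrier G. \<bar>\<phi> (\<gamma> \<otimes>\<^bsub>G\<^esub> \<eta>) - \<phi> \<gamma> - \<phi> \<eta>\<bar> \<le> C)"

definition homogeneous :: "('a, 'b) monoid_scheme \<Rightarrow> ('a \<Rightarrow> real) \<Rightarrow> bool" where
  "homogeneous G \<phi> \<longleftrightarrow>
     (\<forall>\<gamma>\<in>carrier G. \<forall>n::int. \<phi> (\<gamma> [^]\<^bsub>G\<^esub> n) = of_int n * \<phi> \<gamma>)"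

definition is_hom_real :: "('a, 'b) monoid_scheme \<Rightarrow> ('a \<Rightarrow> real) \<Rightarrow> bool" where
  "is_hom_real G \<phi> \<longleftrightarrow>
     (\<forall>\<gamma>\<in>carrier G. \<forall>\<eta>\<in>carrier G. \<phi> (\<gamma> \<otimes>\<^bsub>G\<^esub> \<eta>) = \<phi> \<gamma> + \<phi> \<eta>)"

definition defect_norm :: "('a, 'b) monoid_scheme \<Rightarrow> ('a \<Rightarrow> real) \<Rightarrow> real" where
  "defect_norm G \<phi> =
     (SUP p\<in>carrier G \<times> carrier G. \<bar>\<phi> (fst p \<otimes>\<^bsub>G\<^esub> snd p) - \<phi> (fst p) - \<phi> (snd p)\<bar>)"

definition U1_hom :: "('a, 'b) monoid_scheme \<Rightarrow> ('a \<Rightarrow> complex) \<Rightarrow> bool" where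
  "U1_hom G \<nu> \<longleftrightarrow> (\<forall>\<gamma>\<in>carrier G. cmod (\<nu> \<gamma>) = 1) \<and>
     (\<forall>\<gamma>\<in>carrier G. \<forall>\<eta>\<in>carrier G. \<nu> (\<gamma> \<otimes>\<^bsub>G\<^esub> \<eta>) = \<nu> \<gamma> * \<nu> \<eta>)"

definition D_dist :: "('a, 'b) monoid_scheme \<Rightarrow> ('a \<Rightarrow> complex) \<Rightarrow> real" where
  "D_dist G \<mu> = (INF \<nu>\<in>{\<nu>. U1_hom G \<nu>}. (SUP \<gamma>\<in>carrier G. cmod (\<mu> \<gamma> - \<nu> \<gamma>)))"

end

theory Submission
  imports Defs
begin

text \<open>
  Let \<open>\<phi>\<close> be a homogeneous quasimorphism with defect \<open>\<epsilon> = \<parallel>d\<phi>\<parallel>\<^sub>\<infinity>\<close>, let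
  \<open>\<mu> = cis (2\<pi>\<phi>)\<close>, and let \<open>\<nu>\<close> be any homomorphism into \<open>U(1)\<close> with
  \<open>sup |\<mu> - \<nu>| = s\<close>.  Writing \<open>\<nu> \<gamma> = cis (2\<pi>\<psi> \<gamma>)\<close> with the lift \<open>\<psi> \<gamma>\<close> chosen
  closest to \<open>\<phi> \<gamma>\<close> gives \<open>|\<psi> - \<phi>| \<le> \<theta> = arcsin (s/2) / \<pi>\<close>, because a chord of
  length \<open>s\<close> on the unit circle subtends the angle \<open>2 arcsin (s/2)\<close>.
  The defect of \<open>\<psi>\<close> is integer valued (as \<open>\<nu>\<close> is a homomorphism) and bounded
  by \<open>\<epsilon> + 3\<theta>\<close>; so if \<open>3\<theta> + \<epsilon> < 1\<close> then \<open>\<psi>\<close> is a homomorphism.  A homogeneous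
  function at bounded distance from a homomorphism coincides with it, so \<open>\<phi>\<close>
  would be a homomorphism.  Hence \<open>3\<theta> + \<epsilon> \<ge> 1\<close> for every \<open>\<nu>\<close>, and passing to
  the infimum over \<open>\<nu>\<close> (arcsin being monotone and continuous) yields the claim.
\<close>

lemma cmod_1_minus_cis: "cmod (1 - cis a) = 2 * \<bar>sin (a / 2)\<bar>"
proof -
  have "(cmod (1 - cis a))\<^sup>2 = (1 - cos a)\<^sup>2 + (sin a)\<^sup>2"
    by (simp add: cmod_power2)
  also have "\<dots> = 4 * (sin (a/2))\<^sup>2 * ((sin (a/2))\<^sup>2 + (cos (a/2))\<^sup>2)"
  proof -
    have "\<And>x y :: real. (1 - (1 - 2 * x\<^sup>2))\<^sup>2 + (2 * x * y)\<^sup>2 = 4 * x\<^sup>2 * (x\<^sup>2 + y\<^sup>2)"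
      by (simp add: power2_eq_square algebra_simps)
    then show ?thesis
      using cos_double_sin[of "a/2"] sin_double[of "a/2"] by simp
  qed
  also have "\<dots> = (2 * \<bar>sin (a/2)\<bar>)\<^sup>2"
    by (simp add: power_mult_distrib)
  finally show ?thesis
    by (metis abs_of_nonneg mult_nonneg_nonneg norm_ge_zero power2_eq_imp_eq abs_ge_zero zero_le_numeral)
qed

lemma unit_circle_nearest_lift:
  assumes "cmod w = 1"
  shows "\<exists>y. w = cis (2 * pi * y) \<and> pi * \<bar>y - x\<bar> = arcsin (cmod (cis (2 * pi * x) - w) / 2)"
proof -
  define z where "z = w / cis (2 * pi * x)"
  define a where "a = Arg z"
  have "cmod z = 1" using assms by (simp add: z_def norm_divide)
  then have "z \<noteq> 0" and "sgn z = z" by (auto simp: sgn_div_norm)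
  with Arg_correct[of z] have z: "z = cis a" and a: "- pi < a" "a \<le> pi"
    by (auto simp: a_def)
  have w: "w = cis (2 * pi * x) * cis a"
    using z by (simp add: z_def field_simps)
  define y where "y = x + a / (2 * pi)"
  have "w = cis (2 * pi * y)"
    by (simp add: w y_def cis_mult distrib_left)
  moreover have "pi * \<bar>y - x\<bar> = \<bar>a\<bar> / 2"
    by (simp add: y_def abs_divide)
  moreover have "arcsin (cmod (cis (2 * pi * x) - w) / 2) = \<bar>a\<bar> / 2"
  proof -
    have "cmod (cis (2 * pi * x) - w) = cmod (cis (2 * pi * x) * (1 - cis a))"
      by (simp add: w algebra_simps)
    also have "\<dots> = 2 * \<bar>sin (a / 2)\<bar>"
      by (simp add: norm_mult cmod_1_minus_cis)
    also have "\<bar>sin (a / 2)\<bar> = sin (\<bar>a\<bar> / 2)"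
    proof (cases "a \<ge> 0")
      case True
      then show ?thesis using a sin_ge_zero[of "a / 2"] by simp
    next
      case False
      then show ?thesis using a sin_ge_zero[of "- a / 2"] by simp
    qed
    finally show ?thesis
      using a by (simp add: arcsin_sin)
  qed
  ultimately show ?thesis by metis
qed

lemma cis_eq_1_small:
  assumes "cis (2 * pi * d) = 1" and "\<bar>d\<bar> < 1"
  shows "d = 0"
proof -
  have "cos (2 * pi * d) = 1"
    using assms(1) by (metis cis.sel(1) one_complex.sel(1))
  then obtain n :: int where "2 * pi * d = real_of_int n * 2 * pi"
    using cos_one_2pi_int by blast
  then have "d = n" by simp
  with assms(2) have "n = 0" by linarith
  with \<open>d = n\<close> show ?thesis by simp
qed

lemma arcsin_INF_lower_bound:
  fixes f :: "'c \<Rightarrow> real"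
  assumes "A \<noteq> {}" and range: "\<And>\<nu>. \<nu> \<in> A \<Longrightarrow> 0 \<le> f \<nu> \<and> f \<nu> \<le> 2"
    and bound: "\<And>\<nu>. \<nu> \<in> A \<Longrightarrow> b \<le> arcsin (f \<nu> / 2)"
  shows "b \<le> arcsin ((INF \<nu>\<in>A. f \<nu>) / 2)"
proof -
  obtain \<nu>\<^sub>0 where "\<nu>\<^sub>0 \<in> A" using assms(1) by blast
  have bdd: "bdd_below (f ` A)" using range by (auto intro: bdd_belowI[of _ 0])
  have inf_range: "0 \<le> (INF \<nu>\<in>A. f \<nu>)" "(INF \<nu>\<in>A. f \<nu>) \<le> 2"
  proof -
    show "0 \<le> (INF \<nu>\<in>A. f \<nu>)"
      using range assms(1) by (simp add: cINF_greatest)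
    show "(INF \<nu>\<in>A. f \<nu>) \<le> 2"
      using cINF_lower[OF bdd \<open>\<nu>\<^sub>0 \<in> A\<close>] range[OF \<open>\<nu>\<^sub>0 \<in> A\<close>] by linarith
  qed
  show ?thesis
  proof (cases "b \<le> 0")
    case True
    have "arcsin 0 \<le> arcsin ((INF \<nu>\<in>A. f \<nu>) / 2)"
      using inf_range by (intro arcsin_le_arcsin) auto
    with True show ?thesis by simp
  next
    case False
    have b_le: "b \<le> pi / 2"
      using bound[OF \<open>\<nu>\<^sub>0 \<in> A\<close>] arcsin_ubound[of "f \<nu>\<^sub>0 / 2"] range[OF \<open>\<nu>\<^sub>0 \<in> A\<close>] by simp
    have arcsin_b: "arcsin (sin b) = b"
      using b_le False by (intro arcsin_sin) auto
    have "2 * sin b \<le> f \<nu>" if "\<nu> \<in> A" for \<nu>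
    proof (rule ccontr)
      assume "\<not> ?thesis"
      then have "arcsin (f \<nu> / 2) < arcsin (sin b)"
        using range[OF that] sin_le_one[of b] by (intro arcsin_less_arcsin) auto
      with bound[OF that] arcsin_b show False by simp
    qed
    then have "2 * sin b \<le> (INF \<nu>\<in>A. f \<nu>)"
      using assms(1) by (intro cINF_greatest)
    then have "arcsin (sin b) \<le> arcsin ((INF \<nu>\<in>A. f \<nu>) / 2)"
      using False b_le sin_ge_zero[of b] inf_range by (intro arcsin_le_arcsin) auto
    with arcsin_b show ?thesis by simp
  qed
qed

lemma defect_le_defect_norm:
  assumes "quasimorphism G \<phi>" and "\<gamma> \<in> carrier G" "\<eta> \<in> carrier G"
  shows "\<bar>\<phi> (\<gamma> \<otimes>\<^bsub>G\<^esub> \<eta>) - \<phi> \<gamma> - \<phi> \<eta>\<bar> \<le> defect_norm G \<phi>"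
proof -
  obtain C where "\<forall>\<gamma>\<in>carrier G. \<forall>\<eta>\<in>carrier G. \<bar>\<phi> (\<gamma> \<otimes>\<^bsub>G\<^esub> \<eta>) - \<phi> \<gamma> - \<phi> \<eta>\<bar> \<le> C"
    using assms(1) unfolding quasimorphism_def by blast
  then have "bdd_above ((\<lambda>p. \<bar>\<phi> (fst p \<otimes>\<^bsub>G\<^esub> snd p) - \<phi> (fst p) - \<phi> (snd p)\<bar>)
               ` (carrier G \<times> carrier G))"
    by (auto intro!: bdd_aboveI[of _ C])
  from cSUP_upper[OF _ this, of "(\<gamma>, \<eta>)"] assms(2,3) show ?thesis
    unfolding defect_norm_def by simp
qed

lemma hom_real_nat_pow:
  assumes "group G" "is_hom_real G \<psi>" "\<gamma> \<in> carrier G"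
  shows "\<psi> (\<gamma> [^]\<^bsub>G\<^esub> n) = real n * \<psi> \<gamma>"
proof (induction n)
  case 0
  have "\<psi> \<one>\<^bsub>G\<^esub> = \<psi> \<one>\<^bsub>G\<^esub> + \<psi> \<one>\<^bsub>G\<^esub>"
    using assms(1,2) group.is_monoid monoid.one_closed unfolding is_hom_real_def
    by (metis monoid.l_one)
  then show ?case by simp
next
  case (Suc n)
  with assms show ?case
    by (simp add: is_hom_real_def monoid.nat_pow_closed group.is_monoid algebra_simps)
qed

text \<open>Rigidity: a homogeneous function within bounded distance of a real
  homomorphism coincides with it, since their difference grows linearly
  along powers yet stays bounded.\<close>
lemma homogeneous_near_hom_eq:
  assumes "group G" "homogeneous G \<phi>" "is_hom_real G \<psi>"
    and near: "\<And>\<gamma>. \<gamma> \<in> carrier G \<Longrightarrow> \<bar>\<psi> \<gamma> - \<phi> \<gamma>\<bar> \<le> \<theta>"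
    and "\<gamma> \<in> carrier G"
  shows "\<phi> \<gamma> = \<psi> \<gamma>"
proof (rule ccontr)
  assume "\<phi> \<gamma> \<noteq> \<psi> \<gamma>"
  then have pos: "\<bar>\<phi> \<gamma> - \<psi> \<gamma>\<bar> > 0" by simp
  obtain n :: nat where "\<theta> / \<bar>\<phi> \<gamma> - \<psi> \<gamma>\<bar> < real n"
    using reals_Archimedean2 by blast
  with pos have big: "\<theta> < real n * \<bar>\<phi> \<gamma> - \<psi> \<gamma>\<bar>"
    by (simp add: divide_less_eq)
  have "\<phi> (\<gamma> [^]\<^bsub>G\<^esub> n) = real n * \<phi> \<gamma>"
    using assms(2,5) unfolding homogeneous_def by (metis int_pow_int of_int_of_nat_eq)
  moreover have "\<psi> (\<gamma> [^]\<^bsub>G\<^esub> n) = real n * \<psi> \<gamma>"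
    using hom_real_nat_pow assms(1,3,5) .
  moreover have "\<gamma> [^]\<^bsub>G\<^esub> n \<in> carrier G"
    using assms(1,5) by (simp add: group.is_monoid monoid.nat_pow_closed)
  ultimately have "real n * \<bar>\<phi> \<gamma> - \<psi> \<gamma>\<bar> \<le> \<theta>"
    using near[of "\<gamma> [^]\<^bsub>G\<^esub> n"] by (simp add: abs_mult abs_minus_commute flip: right_diff_distrib)
  with big show False by simp
qed

text \<open>A real lift \<open>\<psi>\<close> of a \<open>U(1)\<close>-homomorphism has integer-valued defect;
  if \<open>\<psi>\<close> stays within \<open>\<theta>\<close> of a function of defect at most \<open>\<epsilon>\<close> and
  \<open>3\<theta> + \<epsilon> < 1\<close>, that integer is forced to be zero.\<close>
lemma close_lift_of_U1_hom_is_hom: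
  assumes "group G" "U1_hom G \<nu>"
    and lift: "\<And>\<gamma>. \<gamma> \<in> carrier G \<Longrightarrow> \<nu> \<gamma> = cis (2 * pi * \<psi> \<gamma>)"
    and near: "\<And>\<gamma>. \<gamma> \<in> carrier G \<Longrightarrow> \<bar>\<psi> \<gamma> - \<phi> \<gamma>\<bar> \<le> \<theta>"
    and defect: "\<And>\<gamma> \<eta>. \<gamma> \<in> carrier G \<Longrightarrow> \<eta> \<in> carrier G \<Longrightarrow>
                   \<bar>\<phi> (\<gamma> \<otimes>\<^bsub>G\<^esub> \<eta>) - \<phi> \<gamma> - \<phi> \<eta>\<bar> \<le> \<epsilon>"
    and small: "3 * \<theta> + \<epsilon> < 1"
  shows "is_hom_real G \<psi>"
  unfolding is_hom_real_def
proof (intro ballI)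
  fix \<gamma> \<eta> assume g: "\<gamma> \<in> carrier G" "\<eta> \<in> carrier G"
  have closed: "\<gamma> \<otimes>\<^bsub>G\<^esub> \<eta> \<in> carrier G"
    using assms(1) g by (simp add: group.is_monoid monoid.m_closed)
  define d where "d = \<psi> (\<gamma> \<otimes>\<^bsub>G\<^esub> \<eta>) - \<psi> \<gamma> - \<psi> \<eta>"
  have "cis (2 * pi * \<psi> (\<gamma> \<otimes>\<^bsub>G\<^esub> \<eta>)) = cis (2 * pi * \<psi> \<gamma>) * cis (2 * pi * \<psi> \<eta>)"
    using assms(2) g closed by (simp add: U1_hom_def lift[symmetric])
  then have "cis (2 * pi * d) = 1"
    by (simp add: d_def cis_mult cis_divide[symmetric] algebra_simps)
  moreover have "\<bar>d\<bar> < 1"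
    using defect[OF g] near[OF closed] near[OF g(1)] near[OF g(2)] small
    unfolding d_def by linarith
  ultimately have "d = 0" by (rule cis_eq_1_small)
  then show "\<psi> (\<gamma> \<otimes>\<^bsub>G\<^esub> \<eta>) = \<psi> \<gamma> + \<psi> \<eta>" by (simp add: d_def)
qed

lemma unit_sup_dist_bounds:
  assumes unit: "\<And>\<gamma>. \<gamma> \<in> A \<Longrightarrow> cmod (\<mu> \<gamma>) = 1 \<and> cmod (\<nu> \<gamma>) = 1" and "x \<in> A"
  shows "cmod (\<mu> x - \<nu> x) \<le> (SUP \<gamma>\<in>A. cmod (\<mu> \<gamma> - \<nu> \<gamma>))"
    and "(SUP \<gamma>\<in>A. cmod (\<mu> \<gamma> - \<nu> \<gamma>)) \<le> 2"
proof -
  have le2: "cmod (\<mu> \<gamma> - \<nu> \<gamma>) \<le> 2" if "\<gamma> \<in> A" for \<gamma>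
    using norm_triangle_ineq4[of "\<mu> \<gamma>" "\<nu> \<gamma>"] unit[OF that] by simp
  then have "bdd_above ((\<lambda>\<gamma>. cmod (\<mu> \<gamma> - \<nu> \<gamma>)) ` A)"
    by (auto intro!: bdd_aboveI[of _ 2])
  then show "cmod (\<mu> x - \<nu> x) \<le> (SUP \<gamma>\<in>A. cmod (\<mu> \<gamma> - \<nu> \<gamma>))"
    using \<open>x \<in> A\<close> by (rule cSUP_upper2) simp
  show "(SUP \<gamma>\<in>A. cmod (\<mu> \<gamma> - \<nu> \<gamma>)) \<le> 2"
    using \<open>x \<in> A\<close> le2 by (auto intro: cSUP_least)
qed

lemma dist_to_U1_hom_lower_bound:
  assumes "group G" "quasimorphism G \<phi>" "homogeneous G \<phi>" "\<not> is_hom_real G \<phi>"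
    and "U1_hom G \<nu>"
  defines "s \<equiv> (SUP \<gamma>\<in>carrier G. cmod (cis (2 * pi * \<phi> \<gamma>) - \<nu> \<gamma>))"
  shows "1 \<le> 3 / pi * arcsin (s / 2) + defect_norm G \<phi>"
proof (rule ccontr)
  assume far: "\<not> 1 \<le> 3 / pi * arcsin (s / 2) + defect_norm G \<phi>"
  define \<theta> where "\<theta> = arcsin (s / 2) / pi"
  have small: "3 * \<theta> + defect_norm G \<phi> < 1"
    using far by (simp add: \<theta>_def)
  have unit: "cmod (cis (2 * pi * \<phi> \<gamma>)) = 1 \<and> cmod (\<nu> \<gamma>) = 1" if "\<gamma> \<in> carrier G" for \<gamma>
    using assms(5) that by (simp add: U1_hom_def)
  have "\<forall>\<gamma>\<in>carrier G. \<exists>y. \<nu> \<gamma> = cis (2 * pi * y) \<and> \<bar>y - \<phi> \<gamma>\<bar> \<le> \<theta>"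
  proof
    fix \<gamma> assume g: "\<gamma> \<in> carrier G"
    obtain y where y: "\<nu> \<gamma> = cis (2 * pi * y)"
      and dist: "pi * \<bar>y - \<phi> \<gamma>\<bar> = arcsin (cmod (cis (2 * pi * \<phi> \<gamma>) - \<nu> \<gamma>) / 2)"
      using unit_circle_nearest_lift[of "\<nu> \<gamma>" "\<phi> \<gamma>"] unit[OF g] by blast
    have chord: "0 \<le> cmod (cis (2 * pi * \<phi> \<gamma>) - \<nu> \<gamma>)"
      "cmod (cis (2 * pi * \<phi> \<gamma>) - \<nu> \<gamma>) \<le> s" "s \<le> 2"
      using unit_sup_dist_bounds[of "carrier G" "\<lambda>\<gamma>. cis (2 * pi * \<phi> \<gamma>)" \<nu>, OF unit g]
      unfolding s_def by auto
    have "arcsin (cmod (cis (2 * pi * \<phi> \<gamma>) - \<nu> \<gamma>) / 2) \<le> arcsin (s / 2)"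
      by (rule arcsin_le_arcsin) (use chord in linarith)+
    with dist have "\<bar>y - \<phi> \<gamma>\<bar> \<le> \<theta>"
      by (simp add: \<theta>_def field_simps)
    with y show "\<exists>y. \<nu> \<gamma> = cis (2 * pi * y) \<and> \<bar>y - \<phi> \<gamma>\<bar> \<le> \<theta>" by blast
  qed
  then obtain \<psi> where lift: "\<And>\<gamma>. \<gamma> \<in> carrier G \<Longrightarrow> \<nu> \<gamma> = cis (2 * pi * \<psi> \<gamma>)"
    and near: "\<And>\<gamma>. \<gamma> \<in> carrier G \<Longrightarrow> \<bar>\<psi> \<gamma> - \<phi> \<gamma>\<bar> \<le> \<theta>"
    by metis
  have "is_hom_real G \<psi>"
    using close_lift_of_U1_hom_is_hom[OF assms(1,5) lift near defect_le_defect_norm[OF assms(2)] small] .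
  then have "\<forall>\<gamma>\<in>carrier G. \<phi> \<gamma> = \<psi> \<gamma>"
    using homogeneous_near_hom_eq[OF assms(1,3) _ near] by blast
  with \<open>is_hom_real G \<psi>\<close> have "is_hom_real G \<phi>"
    using group.is_monoid[OF assms(1)] by (simp add: is_hom_real_def monoid.m_closed)
  with assms(4) show False by contradiction
qed

theorem lemma2p3:
  fixes G :: "('a, 'b) monoid_scheme" and \<phi> :: "'a \<Rightarrow> real"
  assumes "group G"
    and "quasimorphism G \<phi>"
    and "homogeneous G \<phi>"
    and "\<not> is_hom_real G \<phi>"
  defines "\<mu> \<equiv> (\<lambda>\<gamma>. exp (2 * of_real pi * \<i> * of_real (\<phi> \<gamma>)))"
  shows "3 / pi * arcsin (D_dist G \<mu> / 2) + defect_norm G \<phi> \<ge> 1"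
proof -
  define s where "s = (\<lambda>\<nu>. SUP \<gamma>\<in>carrier G. cmod (\<mu> \<gamma> - \<nu> \<gamma>))"
  have \<mu>: "\<mu> = (\<lambda>\<gamma>. cis (2 * pi * \<phi> \<gamma>))"
    unfolding \<mu>_def cis_conv_exp by (simp add: mult_ac)
  have one: "\<one>\<^bsub>G\<^esub> \<in> carrier G"
    using assms(1) by (simp add: group.is_monoid monoid.one_closed)
  have "U1_hom G (\<lambda>_. 1)" by (simp add: U1_hom_def)
  moreover have "0 \<le> s \<nu> \<and> s \<nu> \<le> 2" if "U1_hom G \<nu>" for \<nu>
  proof -
    have "cmod (\<mu> \<gamma>) = 1 \<and> cmod (\<nu> \<gamma>) = 1" if "\<gamma> \<in> carrier G" for \<gamma>
      using \<open>U1_hom G \<nu>\<close> that by (simp add: U1_hom_def \<mu>)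
    from unit_sup_dist_bounds[of "carrier G" \<mu> \<nu>, OF this one] show ?thesis
      using norm_ge_zero[of "\<mu> \<one>\<^bsub>G\<^esub> - \<nu> \<one>\<^bsub>G\<^esub>"] unfolding s_def by linarith
  qed
  moreover have "pi * (1 - defect_norm G \<phi>) / 3 \<le> arcsin (s \<nu> / 2)" if "U1_hom G \<nu>" for \<nu>
    using dist_to_U1_hom_lower_bound[OF assms(1-4) that] by (simp add: s_def \<mu> field_simps)
  ultimately have "pi * (1 - defect_norm G \<phi>) / 3 \<le> arcsin (D_dist G \<mu> / 2)"
    unfolding D_dist_def s_def[symmetric]
    by (intro arcsin_INF_lower_bound) blast+
  then show ?thesis by (simp add: field_simps)
qed

end
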